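(* Let $a,b$ be positive integers and let $d=\gcd(a,b)$. If $a$ divides $b$ or $b$ divides $a$, then $\Gamma(a,b)=1$. Otherwise: (1) if $a/d$ is odd, then $\Gamma(a,b)=1$ if and only if $\Theta(b,a)$ is odd; (2) if $a/d$ is even, then $\Gamma(a,b)=1$ if and only if $\Theta(a,b)$ is odd.
   Context: For relatively prime positive integers $p,q$, exactly one of the equations $px+qy=\frac{(p-1)(q-1)}{2}$ (Equation 1) and $px+qy+1=\frac{(p-1)(q-1)}{2}$ (Equation 2) has a solution in nonnegative integers $(x,y)$. For positive integers $a,b$ with $d=\gcd(a,b)$, $\Gamma(a,b)=1$ if Equation 1 with $(p,q)=(a/d,b/d)$ has a nonnegative integer solution, and $\Gamma(a,b)=2$ otherwise. For positive integers $a,b$ with $d=\gcd(a,b)$ and $b/d>1$, $\Theta(a,b)$ denotes the unique integer with $0<\Theta(a,b)<b/d$ and $(a/d)\Theta(a,b)\equiv 1 \pmod{b/d}$. *)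

theory Defs
  imports "HOL-Number_Theory.Number_Theory"
begin

text \<open>Equation 1 for coprime p, q: p x + q y = (p-1)(q-1)/2 with x, y nonnegative integers.
  Note (p-1)(q-1) is even for coprime p, q, so the division is exact.\<close>
definition eq1_solvable :: "nat \<Rightarrow> nat \<Rightarrow> bool" where
  "eq1_solvable p q \<longleftrightarrow> (\<exists>x y :: nat. p * x + q * y = ((p - 1) * (q - 1)) div 2)"

definition Gamma :: "nat \<Rightarrow> nat \<Rightarrow> nat" where
  "Gamma a b = (if eq1_solvable (a div gcd a b) (b div gcd a b) then 1 else 2)"

text \<open>Theta a b: the unique integer t with 0 < t < b/d and (a/d) t = 1 mod (b/d);
  meaningful when b/d > 1.\<close>
definition Theta :: "nat \<Rightarrow> nat \<Rightarrow> nat" where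
  "Theta a b = (THE t :: nat. 0 < t \<and> t < b div gcd a b \<and>
      [(a div gcd a b) * t = 1] (mod (b div gcd a b)))"

end

theory Submission imports Defs begin

text \<open>Let \<open>p\<close> be odd, \<open>q\<close> coprime to \<open>p\<close> and \<open>0 < t < p\<close> the inverse of \<open>q\<close> modulo \<open>p\<close>.
  Multiplying \<open>2 (p x + q y) = (p - 1) (q - 1)\<close> by \<open>t\<close> and reducing modulo \<open>p\<close> gives
  \<open>2 y \<equiv> t - 1\<close>; since also \<open>2 y < p\<close>, any solution has \<open>t = 2 y + 1\<close>, so \<open>t\<close> is odd.
  Conversely, if \<open>t\<close> is odd and \<open>q t = 1 + p s\<close>, then \<open>x = (q - 1 - s) / 2\<close>,
  \<open>y = (t - 1) / 2\<close> is a solution. For \<open>\<Gamma>(a, b)\<close> this is applied with \<open>p = a/d\<close> if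
  \<open>a/d\<close> is odd, and otherwise with \<open>p = b/d\<close>, which is then odd by coprimality.\<close>

lemma eq1_solvable_commute: "eq1_solvable p q \<longleftrightarrow> eq1_solvable q p"
  unfolding eq1_solvable_def by (metis add.commute mult.commute)

lemma eq1_solvable_if_one: "p = 1 \<or> q = 1 \<Longrightarrow> eq1_solvable p q"
  unfolding eq1_solvable_def by (rule exI[of _ 0], rule exI[of _ 0]) auto

lemma mod_inverseE:
  fixes p q t :: nat
  assumes "0 < t" "t < p" "[q * t = 1] (mod p)"
  obtains s where "q * t = 1 + p * s" "0 < q"
proof -
  have "q * t \<noteq> 0"
  proof
    assume "q * t = 0"
    with assms(3) have "p = 1" by (simp add: cong_0_1_nat')
    with assms(1,2) show False by simp
  qed
  moreover obtain s where "q * t - 1 = p * s"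
    using cong_to_1_nat[OF assms(3)] by (auto elim: dvdE)
  ultimately show thesis
    by (intro that[of s]) (linarith, simp)
qed

lemma eq1_solution_determines_inverse:
  fixes p q t x y :: nat
  assumes sol: "2 * (p * x + q * y) = (p - 1) * (q - 1)"
    and t: "0 < t" "t < p" and inv: "[q * t = 1] (mod p)"
  shows "t = 2 * y + 1"
proof -
  obtain s where s: "q * t = 1 + p * s" and "0 < q"
    using mod_inverseE[OF t inv] .
  have "q * (2 * y) \<le> (p - 1) * q"
    using sol mult_le_mono1[of "q - 1" q "p - 1"] by (simp add: algebra_simps)
  then have y_small: "2 * y \<le> p - 1"
    using \<open>0 < q\<close> by (simp add: mult.commute)
  have sol_int: "2 * (int p * x + int q * y) = (int p - 1) * (int q - 1)"
    using arg_cong[OF sol, of int] t \<open>0 < q\<close> by (simp add: of_nat_diff)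
  have s_int: "int q * int t = 1 + int p * int s"
    using arg_cong[OF s, of int] by simp
  \<comment> \<open>\<open>t\<close> times the equation, minus \<open>2 y + 1\<close> times \<open>q t = 1 + p s\<close>\<close>
  have "2 * int y - (int t - 1) - int p * (int t * q - t - s - 2 * t * x - 2 * s * y) =
      int t * (2 * (int p * x + int q * y) - (int p - 1) * (int q - 1))
      - (2 * int y + 1) * (int q * int t - 1 - int p * int s)"
    by (simp add: algebra_simps)
  then have "2 * int y - (int t - 1) = int p * (int t * q - t - s - 2 * t * x - 2 * s * y)"
    using sol_int s_int by simp
  then have cong: "[2 * int y = int t - 1] (mod int p)"
    by (simp add: cong_iff_dvd_diff)
  have "2 * int y = int t - 1"
    using y_small t by (intro cong_less_imp_eq_int[OF _ _ _ _ cong]) auto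
  then show ?thesis by simp
qed

lemma eq1_solution_of_odd_inverse:
  fixes p q t :: nat
  assumes "odd p" "odd t" "t < p" and inv: "[q * t = 1] (mod p)"
  shows "\<exists>x. 2 * (p * x + q * ((t - 1) div 2)) = (p - 1) * (q - 1)"
proof -
  have "0 < t" using \<open>odd t\<close> by (rule odd_pos)
  obtain s where s: "q * t = 1 + p * s" and "0 < q"
    using mod_inverseE[OF \<open>0 < t\<close> \<open>t < p\<close> inv] .
  have "p * s < q * t" using s by simp
  also have "\<dots> < q * p" using \<open>t < p\<close> \<open>0 < q\<close> by simp
  finally have "s < q" by (simp add: mult.commute)
  have "int q * int t = 1 + int p * int s"
    using arg_cong[OF s, of int] by simp
  then have "int p * (int q - 1 - int s) + int q * (int t - 1) = (int p - 1) * (int q - 1)"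
    by (simp add: algebra_simps)
  moreover have "int (q - 1 - s) = int q - 1 - int s" "int (t - 1) = int t - 1"
    "int (p - 1) = int p - 1" "int (q - 1) = int q - 1"
    using \<open>s < q\<close> \<open>0 < t\<close> \<open>t < p\<close> by (simp_all add: of_nat_diff)
  ultimately have "int (p * (q - 1 - s) + q * (t - 1)) = int ((p - 1) * (q - 1))"
    by (simp only: of_nat_add of_nat_mult)
  then have sol: "p * (q - 1 - s) + q * (t - 1) = (p - 1) * (q - 1)"
    by (simp only: of_nat_eq_iff)
  have "even (p * (q - 1 - s))"
    using arg_cong[OF sol, of even] \<open>odd p\<close> \<open>odd t\<close> by simp
  then have "even (q - 1 - s)"
    using \<open>odd p\<close> by simp
  moreover have "2 * ((t - 1) div 2) = t - 1"
    using \<open>odd t\<close> by simp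
  ultimately have "2 * (p * ((q - 1 - s) div 2) + q * ((t - 1) div 2)) = (p - 1) * (q - 1)"
    using sol by (simp add: distrib_left mult.left_commute[of 2])
  then show ?thesis ..
qed

lemma eq1_solvable_iff_odd_inverse:
  fixes p q t :: nat
  assumes "odd p" "0 < t" "t < p" "[q * t = 1] (mod p)"
  shows "eq1_solvable p q \<longleftrightarrow> odd t"
proof
  assume "eq1_solvable p q"
  then obtain x y where "p * x + q * y = (p - 1) * (q - 1) div 2"
    unfolding eq1_solvable_def by blast
  then have "2 * (p * x + q * y) = (p - 1) * (q - 1)"
    using \<open>odd p\<close> by simp
  then have "t = 2 * y + 1"
    using assms(2-4) by (rule eq1_solution_determines_inverse)
  then show "odd t" by simp
next
  assume "odd t"
  then obtain x where "2 * (p * x + q * ((t - 1) div 2)) = (p - 1) * (q - 1)"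
    using assms(1,3,4) eq1_solution_of_odd_inverse by blast
  then have "p * x + q * ((t - 1) div 2) = (p - 1) * (q - 1) div 2"
    by simp
  then show "eq1_solvable p q"
    unfolding eq1_solvable_def by blast
qed

lemma inverse_mod_unique_nat:
  fixes p q :: nat
  assumes "coprime q p" "1 < p"
  shows "\<exists>!t. 0 < t \<and> t < p \<and> [q * t = 1] (mod p)"
proof -
  obtain x where x: "[q * x = 1] (mod p)"
    using cong_solve_coprime_nat[OF assms(1)] by auto
  then have inv: "[q * (x mod p) = 1] (mod p)"
    by (simp add: cong_def mod_mult_right_eq)
  have "x mod p \<noteq> 0"
  proof
    assume "x mod p = 0"
    with inv assms(2) show False by (simp add: cong_0_1_nat')
  qed
  show ?thesis
  proof
    show "0 < x mod p \<and> x mod p < p \<and> [q * (x mod p) = 1] (mod p)"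
      using \<open>x mod p \<noteq> 0\<close> inv assms(2) by simp
  next
    fix t assume t: "0 < t \<and> t < p \<and> [q * t = 1] (mod p)"
    then have "[q * t = q * (x mod p)] (mod p)"
      using inv by (meson cong_sym cong_trans)
    then have "[t = x mod p] (mod p)"
      using cong_mult_lcancel_nat[OF assms(1)] by simp
    then show "t = x mod p"
      using t by (simp add: cong_def)
  qed
qed

lemma Theta_inverse:
  fixes a b :: nat
  assumes "1 < b div gcd a b"
  shows "0 < Theta a b" "Theta a b < b div gcd a b"
    "[(a div gcd a b) * Theta a b = 1] (mod (b div gcd a b))"
proof -
  have "b \<noteq> 0"
  proof
    assume "b = 0"
    with assms show False by simp
  qed
  then have "coprime (a div gcd a b) (b div gcd a b)"
    by (simp add: div_gcd_coprime)
  with assms have "\<exists>!t. 0 < t \<and> t < b div gcd a b \<and>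
      [(a div gcd a b) * t = 1] (mod (b div gcd a b))"
    by (intro inverse_mod_unique_nat) (simp_all add: coprime_commute)
  from theI'[OF this] show "0 < Theta a b" "Theta a b < b div gcd a b"
    "[(a div gcd a b) * Theta a b = 1] (mod (b div gcd a b))"
    unfolding Theta_def by blast+
qed

lemma dvd_iff_div_gcd_eq_1:
  fixes a b :: nat
  assumes "0 < a"
  shows "a dvd b \<longleftrightarrow> a div gcd a b = 1"
proof
  assume "a dvd b"
  then show "a div gcd a b = 1"
    using assms by (simp add: gcd_nat.absorb1)
next
  assume "a div gcd a b = 1"
  then have "gcd a b = a"
    using dvd_div_mult_self[OF gcd_dvd1[of a b]] by simp
  then show "a dvd b"
    by (metis gcd_dvd2)
qed

theorem theorem1p1:
  fixes a b :: nat
  assumes "a > 0" and "b > 0"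
  shows "((a dvd b \<or> b dvd a) \<longrightarrow> Gamma a b = 1) \<and>
         ((\<not> a dvd b \<and> \<not> b dvd a) \<longrightarrow>
            (odd (a div gcd a b) \<longrightarrow> (Gamma a b = 1 \<longleftrightarrow> odd (Theta b a))) \<and>
            (even (a div gcd a b) \<longrightarrow> (Gamma a b = 1 \<longleftrightarrow> odd (Theta a b))))"
proof -
  define p q where "p = a div gcd a b" and "q = b div gcd a b"
  have q_alt: "q = b div gcd b a" and p_alt: "p = a div gcd b a"
    by (simp_all add: p_def q_def gcd.commute)
  have "coprime p q"
    using assms by (simp add: p_def q_def div_gcd_coprime)
  have Gamma: "Gamma a b = 1 \<longleftrightarrow> eq1_solvable p q"
    by (simp add: Gamma_def p_def q_def)
  have p_one: "a dvd b \<longleftrightarrow> p = 1"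
    unfolding p_def by (rule dvd_iff_div_gcd_eq_1[OF assms(1)])
  have q_one: "b dvd a \<longleftrightarrow> q = 1"
    unfolding q_alt by (rule dvd_iff_div_gcd_eq_1[OF assms(2)])
  have "0 < p" "0 < q"
    using assms by (simp_all add: p_def q_def div_greater_zero_iff)
  show ?thesis
  proof (intro conjI impI)
    assume "a dvd b \<or> b dvd a"
    then show "Gamma a b = 1"
      using Gamma p_one q_one eq1_solvable_if_one by blast
  next
    assume "\<not> a dvd b \<and> \<not> b dvd a" "odd (a div gcd a b)"
    then have "odd p" and "1 < p"
      using p_one \<open>0 < p\<close> unfolding p_def[symmetric] by simp_all
    then have "0 < Theta b a" "Theta b a < p" "[q * Theta b a = 1] (mod p)"
      using Theta_inverse[where a = b and b = a] unfolding p_alt q_alt by simp_all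
    then show "Gamma a b = 1 \<longleftrightarrow> odd (Theta b a)"
      using Gamma eq1_solvable_iff_odd_inverse[OF \<open>odd p\<close>] by simp
  next
    assume "\<not> a dvd b \<and> \<not> b dvd a" "even (a div gcd a b)"
    then have "even p" and "1 < q"
      using q_one \<open>0 < q\<close> unfolding p_def[symmetric] by simp_all
    then have "odd q"
      using coprime_common_divisor[OF \<open>coprime p q\<close>, of 2] by auto
    have "0 < Theta a b" "Theta a b < q" "[p * Theta a b = 1] (mod q)"
      using Theta_inverse \<open>1 < q\<close> unfolding p_def q_def by simp_all
    then show "Gamma a b = 1 \<longleftrightarrow> odd (Theta a b)"
      using Gamma eq1_solvable_commute eq1_solvable_iff_odd_inverse[OF \<open>odd q\<close>] by simp
  qed
qed

end
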